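(* Let $f(x,y)=\mathbb{E}_{\xi\sim\mathcal{D}}[f(x,y;\xi)]$ on $\mathbb{R}^d\times\mathbb{R}^p$ and assume: (A2) for every $\xi$, $\nabla_x f(\cdot,\cdot;\xi)$ and $\nabla_y f(\cdot,\cdot;\xi)$ are $L_f$-Lipschitz in each of the arguments $x$ and $y$ separately; (A3) $\mathbb{E}_\xi[\nabla f(x,y;\xi)]=\nabla f(x,y)$ and $\mathbb{E}_\xi\|\nabla f(x,y)-\nabla f(x,y;\xi)\|^2\le\sigma^2$ for all $x,y$. Let $\{x_t,y_t,\tilde x_t,\tilde y_t,v_t,w_t\}$ be generated by the MSGDA algorithm (see context). Then for all $t\ge1$, $$\mathbb{E}\|v_{t+1}-\nabla_y f(x_{t+1},y_{t+1})\|^2\le(1-\alpha_{t+1})\mathbb{E}\|v_t-\nabla_y f(x_t,y_t)\|^2+2\alpha_{t+1}^2\sigma^2+4L_f^2\eta_t^2\,\mathbb{E}\big(\|\tilde x_{t+1}-x_t\|^2+\|\tilde y_{t+1}-y_t\|^2\big),$$ $$\mathbb{E}\|w_{t+1}-\nabla_x f(x_{t+1},y_{t+1})\|^2\le(1-\beta_{t+1})\mathbb{E}\|w_t-\nabla_x f(x_t,y_t)\|^2+2\beta_{t+1}^2\sigma^2+4L_f^2\eta_t^2\,\mathbb{E}\big(\|\tilde x_{t+1}-x_t\|^2+\|\tilde y_{t+1}-y_t\|^2\big).$$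
   Context: MSGDA algorithm: given constants $\gamma,\lambda>0$, sequences $\eta_t>0$ and $\alpha_t,\beta_t\in(0,1]$, initial points $x_1,y_1$, and samples $\xi_1,\xi_2,\dots$ drawn i.i.d. from $\mathcal{D}$: set $v_1=\nabla_y f(x_1,y_1;\xi_1)$, $w_1=\nabla_x f(x_1,y_1;\xi_1)$, and for $t\ge1$: $\tilde y_{t+1}=y_t+\lambda v_t$, $\tilde x_{t+1}=x_t-\gamma w_t$; $y_{t+1}=y_t+\eta_t(\tilde y_{t+1}-y_t)$, $x_{t+1}=x_t+\eta_t(\tilde x_{t+1}-x_t)$; $v_{t+1}=\nabla_y f(x_{t+1},y_{t+1};\xi_{t+1})+(1-\alpha_{t+1})[v_t-\nabla_y f(x_t,y_t;\xi_{t+1})]$; $w_{t+1}=\nabla_x f(x_{t+1},y_{t+1};\xi_{t+1})+(1-\beta_{t+1})[w_t-\nabla_x f(x_t,y_t;\xi_{t+1})]$. *)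

theory Defs
  imports "HOL-Probability.Probability"
begin

text \<open>MSGDA iterates driven by a sample sequence s (s i is the sample xi_i, i >= 1).
  The state at index t (t >= 1) is (x_t, y_t, v_t, w_t); index 0 is unused and
  coincides with index 1.  gx / gy are the stochastic partial gradients
  nabla_x f(x,y;xi), nabla_y f(x,y;xi).\<close>

fun msgda ::
  "('x::real_vector \<Rightarrow> 'y::real_vector \<Rightarrow> 's \<Rightarrow> 'x) \<Rightarrow> ('x \<Rightarrow> 'y \<Rightarrow> 's \<Rightarrow> 'y) \<Rightarrow>
   real \<Rightarrow> real \<Rightarrow> (nat \<Rightarrow> real) \<Rightarrow> (nat \<Rightarrow> real) \<Rightarrow> (nat \<Rightarrow> real) \<Rightarrow>
   'x \<Rightarrow> 'y \<Rightarrow> (nat \<Rightarrow> 's) \<Rightarrow> nat \<Rightarrow> 'x \<times> 'y \<times> 'y \<times> 'x" where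
  "msgda gx gy \<gamma> lam \<eta> \<alpha> \<beta> x1 y1 s 0 = (x1, y1, gy x1 y1 (s 1), gx x1 y1 (s 1))"
| "msgda gx gy \<gamma> lam \<eta> \<alpha> \<beta> x1 y1 s (Suc 0) = (x1, y1, gy x1 y1 (s 1), gx x1 y1 (s 1))"
| "msgda gx gy \<gamma> lam \<eta> \<alpha> \<beta> x1 y1 s (Suc (Suc n)) =
    (case msgda gx gy \<gamma> lam \<eta> \<alpha> \<beta> x1 y1 s (Suc n) of (x, y, v, w) \<Rightarrow>
     (let t = Suc n;
          yt = y + lam *\<^sub>R v;
          xt = x - \<gamma> *\<^sub>R w;
          y' = y + \<eta> t *\<^sub>R (yt - y);
          x' = x + \<eta> t *\<^sub>R (xt - x);
          v' = gy x' y' (s (t + 1)) + (1 - \<alpha> (t + 1)) *\<^sub>R (v - gy x y (s (t + 1)));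
          w' = gx x' y' (s (t + 1)) + (1 - \<beta> (t + 1)) *\<^sub>R (w - gx x y (s (t + 1)))
      in (x', y', v', w')))"

definition msgda_x where
  "msgda_x gx gy \<gamma> lam \<eta> \<alpha> \<beta> x1 y1 s t = fst (msgda gx gy \<gamma> lam \<eta> \<alpha> \<beta> x1 y1 s t)"
definition msgda_y where
  "msgda_y gx gy \<gamma> lam \<eta> \<alpha> \<beta> x1 y1 s t = fst (snd (msgda gx gy \<gamma> lam \<eta> \<alpha> \<beta> x1 y1 s t))"
definition msgda_v where
  "msgda_v gx gy \<gamma> lam \<eta> \<alpha> \<beta> x1 y1 s t = fst (snd (snd (msgda gx gy \<gamma> lam \<eta> \<alpha> \<beta> x1 y1 s t)))"
definition msgda_w where
  "msgda_w gx gy \<gamma> lam \<eta> \<alpha> \<beta> x1 y1 s t = snd (snd (snd (msgda gx gy \<gamma> lam \<eta> \<alpha> \<beta> x1 y1 s t)))"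

fun msgda_xtil where
  "msgda_xtil gx gy \<gamma> lam \<eta> \<alpha> \<beta> x1 y1 s 0 = x1"
| "msgda_xtil gx gy \<gamma> lam \<eta> \<alpha> \<beta> x1 y1 s (Suc t) =
     msgda_x gx gy \<gamma> lam \<eta> \<alpha> \<beta> x1 y1 s t - \<gamma> *\<^sub>R msgda_w gx gy \<gamma> lam \<eta> \<alpha> \<beta> x1 y1 s t"
fun msgda_ytil where
  "msgda_ytil gx gy \<gamma> lam \<eta> \<alpha> \<beta> x1 y1 s 0 = y1"
| "msgda_ytil gx gy \<gamma> lam \<eta> \<alpha> \<beta> x1 y1 s (Suc t) =
     msgda_y gx gy \<gamma> lam \<eta> \<alpha> \<beta> x1 y1 s t + lam *\<^sub>R msgda_v gx gy \<gamma> lam \<eta> \<alpha> \<beta> x1 y1 s t"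

end

theory Submission
  imports Defs
begin

(*
  The estimator v is a recursive momentum (STORM) estimator.  With e_t = v_t - nabla_y f(x_t, y_t),
  g = nabla_y f(x_(t+1), y_(t+1); xi_(t+1)) and g' = nabla_y f(x_t, y_t; xi_(t+1)), the update reads
    e_(t+1) = (1 - alpha) e_t + B,
    B = alpha (g - E g) + (1 - alpha) ((g - g') - E (g - g')),
  where E averages over the fresh sample only.  Since xi_(t+1) is independent of the iterates up
  to time t, B has mean zero given the past, so the cross term vanishes:
    E |e_(t+1)|^2 = (1 - alpha)^2 E |e_t|^2 + E |B|^2.
  By (A3), g - E g has second moment at most sigma^2; by (A2), |g - g'| is bounded by
  K = L_f (|x_(t+1) - x_t| + |y_(t+1) - y_t|), so its centred version has second moment at most
  K^2 <= 2 L_f^2 (|x_(t+1) - x_t|^2 + |y_(t+1) - y_t|^2).  Together with (1 - alpha)^2 <= 1 - alpha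
  this gives the bound.  The conditioning is realised by Fubini's theorem, the joint law of the
  iterates and the fresh sample being the product of their laws.  The same argument applies to w.
*)

lemma norm_add_squared_le:
  fixes x y :: "'v::real_normed_vector"
  shows "(norm (x + y))\<^sup>2 \<le> 2 * (norm x)\<^sup>2 + 2 * (norm y)\<^sup>2"
proof -
  have "(norm (x + y))\<^sup>2 \<le> (norm x + norm y)\<^sup>2"
    by (simp add: norm_triangle_ineq power_mono)
  also have "\<dots> \<le> 2 * (norm x)\<^sup>2 + 2 * (norm y)\<^sup>2"
    using zero_le_power2[of "norm x - norm y"] by (simp add: power2_diff power2_sum)
  finally show ?thesis .
qed

lemma norm_diff_le_of_separately_lipschitz:
  fixes h :: "'x::real_normed_vector \<Rightarrow> 'y::real_normed_vector \<Rightarrow> 'z::real_normed_vector"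
  assumes "\<And>x x' y. norm (h x y - h x' y) \<le> L * norm (x - x')"
    and "\<And>x y y'. norm (h x y - h x y') \<le> L * norm (y - y')"
  shows "norm (h x y - h x' y') \<le> L * (norm (x - x') + norm (y - y'))"
proof -
  have "h x y - h x' y' = (h x y - h x' y) + (h x' y - h x' y')"
    by simp
  then have "norm (h x y - h x' y') \<le> norm (h x y - h x' y) + norm (h x' y - h x' y')"
    by (metis norm_triangle_ineq)
  also have "\<dots> \<le> L * norm (x - x') + L * norm (y - y')"
    using assms by (rule add_mono)
  finally show ?thesis by (simp add: distrib_left)
qed

lemma damped_sum_squared_le:
  fixes a L p q :: real
  assumes "0 \<le> a" "a \<le> 1"
  shows "2 * (1 - a)\<^sup>2 * (L * (p + q))\<^sup>2 \<le> 4 * L\<^sup>2 * (p\<^sup>2 + q\<^sup>2)"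
proof -
  have "(1 - a)\<^sup>2 * (p + q)\<^sup>2 \<le> 1 * (2 * p\<^sup>2 + 2 * q\<^sup>2)"
    using assms norm_add_squared_le[of p q] by (intro mult_mono) (auto simp: power_le_one)
  have "2 * (1 - a)\<^sup>2 * (L * (p + q))\<^sup>2 = 2 * L\<^sup>2 * ((1 - a)\<^sup>2 * (p + q)\<^sup>2)"
    by (simp add: power_mult_distrib mult_ac)
  also have "\<dots> \<le> 2 * L\<^sup>2 * (2 * p\<^sup>2 + 2 * q\<^sup>2)"
    using \<open>(1 - a)\<^sup>2 * (p + q)\<^sup>2 \<le> _\<close> by (intro mult_left_mono) auto
  also have "\<dots> = 4 * L\<^sup>2 * (p\<^sup>2 + q\<^sup>2)"
    by (simp add: algebra_simps)
  finally show ?thesis .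
qed

section \<open>Square-integrable random variables\<close>

lemma borel_measurable_fst [measurable]:
  "fst \<in> borel_measurable (borel :: ('a::second_countable_topology \<times> 'b::second_countable_topology) measure)"
  by (intro borel_measurable_continuous_onI continuous_on_fst continuous_on_id)

lemma borel_measurable_snd [measurable]:
  "snd \<in> borel_measurable (borel :: ('a::second_countable_topology \<times> 'b::second_countable_topology) measure)"
  by (intro borel_measurable_continuous_onI continuous_on_snd continuous_on_id)

definition square_integrable :: "'a measure \<Rightarrow> ('a \<Rightarrow> 'b::euclidean_space) \<Rightarrow> bool" where
  "square_integrable N f \<longleftrightarrow> f \<in> borel_measurable N \<and> integrable N (\<lambda>\<omega>. (norm (f \<omega>))\<^sup>2)"

lemma square_integrableD [measurable_dest]:
  "square_integrable N f \<Longrightarrow> f \<in> borel_measurable N"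
  by (simp add: square_integrable_def)

lemma square_integrable_integrable_square:
  "square_integrable N f \<Longrightarrow> integrable N (\<lambda>\<omega>. (norm (f \<omega>))\<^sup>2)"
  by (simp add: square_integrable_def)

lemma square_integrable_bound:
  fixes f :: "'a \<Rightarrow> 'b::euclidean_space" and g :: "'a \<Rightarrow> 'c::euclidean_space"
  assumes "square_integrable N f" "g \<in> borel_measurable N"
    and "\<And>\<omega>. \<omega> \<in> space N \<Longrightarrow> norm (g \<omega>) \<le> norm (f \<omega>)"
  shows "square_integrable N g"
  unfolding square_integrable_def
proof
  show "integrable N (\<lambda>\<omega>. (norm (g \<omega>))\<^sup>2)"
    using square_integrable_integrable_square[OF assms(1)]
    by (rule Bochner_Integration.integrable_bound) (use assms in \<open>auto intro!: AE_I2 power_mono\<close>)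
qed fact

lemma square_integrable_const: "finite_measure N \<Longrightarrow> square_integrable N (\<lambda>_. c)"
  by (simp add: square_integrable_def finite_measure.integrable_const)

lemma square_integrable_add:
  fixes f g :: "'a \<Rightarrow> 'b::euclidean_space"
  assumes f: "square_integrable N f" and g: "square_integrable N g"
  shows "square_integrable N (\<lambda>\<omega>. f \<omega> + g \<omega>)"
  unfolding square_integrable_def
proof
  show "(\<lambda>\<omega>. f \<omega> + g \<omega>) \<in> borel_measurable N" using f g by measurable
  have "integrable N (\<lambda>\<omega>. 2 * (norm (f \<omega>))\<^sup>2 + 2 * (norm (g \<omega>))\<^sup>2)"
    using f g by (simp add: square_integrable_def)
  then show "integrable N (\<lambda>\<omega>. (norm (f \<omega> + g \<omega>))\<^sup>2)"
  proof (rule Bochner_Integration.integrable_bound)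
    show "(\<lambda>\<omega>. (norm (f \<omega> + g \<omega>))\<^sup>2) \<in> borel_measurable N"
      using f g by measurable
    show "AE \<omega> in N. norm ((norm (f \<omega> + g \<omega>))\<^sup>2)
        \<le> norm (2 * (norm (f \<omega>))\<^sup>2 + 2 * (norm (g \<omega>))\<^sup>2)"
      by (intro AE_I2) (simp add: norm_add_squared_le)
  qed
qed

lemma square_integrable_scaleR:
  fixes f :: "'a \<Rightarrow> 'b::euclidean_space"
  assumes "square_integrable N f"
  shows "square_integrable N (\<lambda>\<omega>. c *\<^sub>R f \<omega>)"
  unfolding square_integrable_def
proof
  show "(\<lambda>\<omega>. c *\<^sub>R f \<omega>) \<in> borel_measurable N"
    using assms by measurable
qed (use assms in \<open>simp add: square_integrable_def power_mult_distrib\<close>)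

lemma square_integrable_diff:
  fixes f g :: "'a \<Rightarrow> 'b::euclidean_space"
  assumes "square_integrable N f" "square_integrable N g"
  shows "square_integrable N (\<lambda>\<omega>. f \<omega> - g \<omega>)"
  using square_integrable_add[OF assms(1) square_integrable_scaleR[OF assms(2), of "-1"]] by simp

lemma square_integrable_norm:
  assumes "square_integrable N f"
  shows "square_integrable N (\<lambda>\<omega>. norm (f \<omega>))"
  unfolding square_integrable_def
proof
  show "(\<lambda>\<omega>. norm (f \<omega>)) \<in> borel_measurable N"
    using assms by measurable
qed (use assms in \<open>simp add: square_integrable_def\<close>)

lemma square_integrable_Pair:
  fixes f :: "'a \<Rightarrow> 'b::euclidean_space" and g :: "'a \<Rightarrow> 'c::euclidean_space"
  assumes f: "square_integrable N f" and g: "square_integrable N g"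
  shows "square_integrable N (\<lambda>\<omega>. (f \<omega>, g \<omega>))"
proof -
  have "square_integrable N (\<lambda>\<omega>. norm (f \<omega>) + norm (g \<omega>))"
    by (intro square_integrable_add square_integrable_norm f g)
  then show ?thesis
  proof (rule square_integrable_bound)
    show "(\<lambda>\<omega>. (f \<omega>, g \<omega>)) \<in> borel_measurable N"
      using f g by measurable
  qed (auto intro: order.trans[OF norm_Pair_le])
qed

lemma square_integrable_fst:
  fixes f :: "'a \<Rightarrow> 'b::euclidean_space \<times> 'c::euclidean_space"
  assumes "square_integrable N f"
  shows "square_integrable N (\<lambda>\<omega>. fst (f \<omega>))"
proof (rule square_integrable_bound[OF assms])
  show "(\<lambda>\<omega>. fst (f \<omega>)) \<in> borel_measurable N"
    using assms by measurable
qed (metis norm_fst_le prod.collapse)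

lemma square_integrable_snd:
  fixes f :: "'a \<Rightarrow> 'b::euclidean_space \<times> 'c::euclidean_space"
  assumes "square_integrable N f"
  shows "square_integrable N (\<lambda>\<omega>. snd (f \<omega>))"
proof (rule square_integrable_bound[OF assms])
  show "(\<lambda>\<omega>. snd (f \<omega>)) \<in> borel_measurable N"
    using assms by measurable
qed (metis norm_snd_le prod.collapse)

lemma integral_norm_Pair_squared:
  fixes f :: "'a \<Rightarrow> 'b::euclidean_space" and g :: "'a \<Rightarrow> 'c::euclidean_space"
  assumes "square_integrable N f" "square_integrable N g"
  shows "(\<integral>\<omega>. (norm (f \<omega>, g \<omega>))\<^sup>2 \<partial>N) = (\<integral>\<omega>. (norm (f \<omega>))\<^sup>2 \<partial>N) + (\<integral>\<omega>. (norm (g \<omega>))\<^sup>2 \<partial>N)"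
  using assms by (simp add: norm_Pair square_integrable_def)

lemma square_integrable_comp_distr:
  assumes f: "square_integrable D f" and \<xi>: "\<xi> \<in> M \<rightarrow>\<^sub>M D" "distr M D \<xi> = D"
  shows "square_integrable M (\<lambda>\<omega>. f (\<xi> \<omega>))"
  unfolding square_integrable_def
proof
  show "(\<lambda>\<omega>. f (\<xi> \<omega>)) \<in> borel_measurable M"
    using measurable_comp[OF \<xi>(1) square_integrableD[OF f]] by (simp add: comp_def)
  show "integrable M (\<lambda>\<omega>. (norm (f (\<xi> \<omega>)))\<^sup>2)"
    using f \<xi> by (subst integrable_distr_eq[symmetric]) (auto simp: square_integrable_def)
qed

lemma (in finite_measure) square_integrable_imp_integrable:
  assumes "square_integrable M f"
  shows "integrable M f"
proof -
  have "integrable M (\<lambda>\<omega>. 1 + (norm (f \<omega>))\<^sup>2)"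
    using assms by (simp add: square_integrable_def)
  then show ?thesis
  proof (rule Bochner_Integration.integrable_bound)
    have "norm (f \<omega>) \<le> 1 + (norm (f \<omega>))\<^sup>2" for \<omega>
    proof -
      have "2 * norm (f \<omega>) \<le> 1 + (norm (f \<omega>))\<^sup>2"
        using zero_le_power2[of "norm (f \<omega>) - 1"] by (simp add: power2_diff)
      then show ?thesis using norm_ge_zero[of "f \<omega>"] by linarith
    qed
    then show "AE \<omega> in M. norm (f \<omega>) \<le> norm (1 + (norm (f \<omega>))\<^sup>2)"
      by (intro AE_I2) simp
  qed (use assms in simp)
qed

section \<open>Second moment of a recursive momentum update\<close>

lemma (in prob_space) expectation_norm_const_add_squared:
  fixes B :: "'a \<Rightarrow> 'b::euclidean_space"
  assumes "square_integrable M B"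
  shows "(\<integral>\<omega>. (norm (c + B \<omega>))\<^sup>2 \<partial>M)
    = (norm c)\<^sup>2 + 2 * (c \<bullet> expectation B) + (\<integral>\<omega>. (norm (B \<omega>))\<^sup>2 \<partial>M)"
proof -
  have B: "integrable M B" "integrable M (\<lambda>\<omega>. (norm (B \<omega>))\<^sup>2)"
    using assms square_integrable_imp_integrable by (auto simp: square_integrable_def)
  have "(norm (c + B \<omega>))\<^sup>2 = (norm c)\<^sup>2 + 2 * (c \<bullet> B \<omega>) + (norm (B \<omega>))\<^sup>2" for \<omega>
    unfolding power2_norm_eq_inner by (simp add: inner_add_left inner_add_right inner_commute)
  then show ?thesis
    using B by (simp add: integral_inner_right prob_space)
qed

lemma (in prob_space) centered_second_moment_le:
  fixes f :: "'a \<Rightarrow> 'b::euclidean_space"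
  assumes "square_integrable M f"
  shows "(\<integral>\<omega>. (norm (f \<omega> - expectation f))\<^sup>2 \<partial>M) \<le> (\<integral>\<omega>. (norm (f \<omega>))\<^sup>2 \<partial>M)"
  using expectation_norm_const_add_squared[OF assms, of "- expectation f"]
  by (simp add: power2_norm_eq_inner)

lemma integral_norm_scaleR_add_squared_le:
  fixes P Q :: "'a \<Rightarrow> 'b::euclidean_space"
  assumes P: "square_integrable N P" and Q: "square_integrable N Q"
  shows "(\<integral>\<omega>. (norm (a *\<^sub>R P \<omega> + c *\<^sub>R Q \<omega>))\<^sup>2 \<partial>N)
    \<le> 2 * a\<^sup>2 * (\<integral>\<omega>. (norm (P \<omega>))\<^sup>2 \<partial>N) + 2 * c\<^sup>2 * (\<integral>\<omega>. (norm (Q \<omega>))\<^sup>2 \<partial>N)"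
proof -
  have "square_integrable N (\<lambda>\<omega>. a *\<^sub>R P \<omega> + c *\<^sub>R Q \<omega>)"
    by (intro square_integrable_add square_integrable_scaleR P Q)
  then have "(\<integral>\<omega>. (norm (a *\<^sub>R P \<omega> + c *\<^sub>R Q \<omega>))\<^sup>2 \<partial>N)
      \<le> (\<integral>\<omega>. 2 * a\<^sup>2 * (norm (P \<omega>))\<^sup>2 + 2 * c\<^sup>2 * (norm (Q \<omega>))\<^sup>2 \<partial>N)"
    using P Q norm_add_squared_le[of "a *\<^sub>R P \<omega>" "c *\<^sub>R Q \<omega>" for \<omega>]
    by (intro integral_mono) (auto simp: square_integrable_def power_mult_distrib mult.assoc)
  also have "\<dots> = 2 * a\<^sup>2 * (\<integral>\<omega>. (norm (P \<omega>))\<^sup>2 \<partial>N) + 2 * c\<^sup>2 * (\<integral>\<omega>. (norm (Q \<omega>))\<^sup>2 \<partial>N)"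
    using P Q by (simp add: square_integrable_def)
  finally show ?thesis .
qed

lemma (in prob_space) centered_second_moment_le_bound:
  fixes d :: "'a \<Rightarrow> 'b::euclidean_space"
  assumes d: "d \<in> borel_measurable M" and K: "\<And>\<omega>. \<omega> \<in> space M \<Longrightarrow> norm (d \<omega>) \<le> K"
  shows "square_integrable M d" "(\<integral>\<omega>. (norm (d \<omega> - expectation d))\<^sup>2 \<partial>M) \<le> K\<^sup>2"
proof -
  show sq: "square_integrable M d"
    using square_integrable_const[OF finite_measure_axioms, of K] d
    by (rule square_integrable_bound) (use K in \<open>auto intro: order.trans[OF _ abs_ge_self]\<close>)
  have "(\<integral>\<omega>. (norm (d \<omega> - expectation d))\<^sup>2 \<partial>M) \<le> (\<integral>\<omega>. (norm (d \<omega>))\<^sup>2 \<partial>M)"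
    by (rule centered_second_moment_le[OF sq])
  also have "\<dots> \<le> K\<^sup>2"
    using K sq by (intro integral_le_const AE_I2) (auto simp: square_integrable_def intro!: power_mono)
  finally show "(\<integral>\<omega>. (norm (d \<omega> - expectation d))\<^sup>2 \<partial>M) \<le> K\<^sup>2" .
qed

lemma (in prob_space) momentum_update_error_le:
  fixes g g' :: "'a \<Rightarrow> 'b::euclidean_space"
  assumes g: "square_integrable M g" and g': "g' \<in> borel_measurable M"
    and K: "\<And>\<omega>. \<omega> \<in> space M \<Longrightarrow> norm (g \<omega> - g' \<omega>) \<le> K"
    and var: "(\<integral>\<omega>. (norm (g \<omega> - expectation g))\<^sup>2 \<partial>M) \<le> \<sigma>\<^sup>2"
    and a: "0 \<le> a" "a \<le> 1"
  shows "(\<integral>\<omega>. (norm (g \<omega> + (1 - a) *\<^sub>R (u - g' \<omega>) - expectation g))\<^sup>2 \<partial>M)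
    \<le> (1 - a) * (norm (u - expectation g'))\<^sup>2 + 2 * a\<^sup>2 * \<sigma>\<^sup>2 + 2 * (1 - a)\<^sup>2 * K\<^sup>2"
proof -
  define c where "c = 1 - a"
  define d where "d \<omega> = g \<omega> - g' \<omega>" for \<omega>
  define P where "P \<omega> = g \<omega> - expectation g" for \<omega>
  define Q where "Q \<omega> = d \<omega> - expectation d" for \<omega>
  define B where "B \<omega> = a *\<^sub>R P \<omega> + c *\<^sub>R Q \<omega>" for \<omega>
  note const = square_integrable_const[OF finite_measure_axioms]
  have "d \<in> borel_measurable M"
    unfolding d_def using g g' by measurable
  note d = centered_second_moment_le_bound[OF this K[folded d_def]]
  have g'_sq: "square_integrable M g'"
    using square_integrable_diff[OF g d(1)] by (simp add: d_def)
  have P: "square_integrable M P" and Q: "square_integrable M Q"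
    unfolding P_def Q_def by (intro square_integrable_diff g d(1) const)+
  have B: "square_integrable M B"
    unfolding B_def by (intro square_integrable_add square_integrable_scaleR P Q)
  have "expectation P = 0" "expectation Q = 0"
    unfolding P_def Q_def using square_integrable_imp_integrable[OF g] square_integrable_imp_integrable[OF d(1)]
    by (simp_all add: prob_space)
  then have EB: "expectation B = 0"
    unfolding B_def using P Q by (simp add: square_integrable_imp_integrable)
  have "(\<integral>\<omega>. (norm (B \<omega>))\<^sup>2 \<partial>M)
      \<le> 2 * a\<^sup>2 * (\<integral>\<omega>. (norm (P \<omega>))\<^sup>2 \<partial>M) + 2 * c\<^sup>2 * (\<integral>\<omega>. (norm (Q \<omega>))\<^sup>2 \<partial>M)"
    unfolding B_def by (rule integral_norm_scaleR_add_squared_le[OF P Q])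
  also have "\<dots> \<le> 2 * a\<^sup>2 * \<sigma>\<^sup>2 + 2 * c\<^sup>2 * K\<^sup>2"
    using var d(2) by (intro add_mono mult_left_mono) (auto simp: P_def Q_def)
  finally have EB2: "(\<integral>\<omega>. (norm (B \<omega>))\<^sup>2 \<partial>M) \<le> 2 * a\<^sup>2 * \<sigma>\<^sup>2 + 2 * c\<^sup>2 * K\<^sup>2" .
  have "c\<^sup>2 \<le> c"
    using mult_left_le[of c c] a by (simp add: c_def power2_eq_square)
  then have shrink: "c\<^sup>2 * (norm (u - expectation g'))\<^sup>2 \<le> c * (norm (u - expectation g'))\<^sup>2"
    by (intro mult_right_mono) auto
  have Ed: "expectation d = expectation g - expectation g'"
    unfolding d_def using g g'_sq by (simp add: square_integrable_imp_integrable)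
  have "g \<omega> + c *\<^sub>R (u - g' \<omega>) - expectation g = c *\<^sub>R (u - expectation g') + B \<omega>" for \<omega>
    by (simp add: Ed B_def P_def Q_def d_def c_def algebra_simps)
  then show ?thesis
    using expectation_norm_const_add_squared[OF B, of "c *\<^sub>R (u - expectation g')"] EB EB2 shrink
    by (simp add: c_def power_mult_distrib)
qed

section \<open>Expectations under a product law\<close>

lemma (in prob_space) expectation_le_of_product_distribution:
  fixes H :: "'z \<times> 'y \<Rightarrow> real" and R :: "'z \<Rightarrow> real"
  assumes Z: "random_variable S Z" and Y: "random_variable T Y"
    and product: "distr M (S \<Otimes>\<^sub>M T) (\<lambda>\<omega>. (Z \<omega>, Y \<omega>)) = distr M S Z \<Otimes>\<^sub>M distr M T Y"
    and H: "H \<in> borel_measurable (S \<Otimes>\<^sub>M T)" "\<And>p. 0 \<le> H p"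
    and H_integrable: "\<And>z. z \<in> space S \<Longrightarrow> integrable (distr M T Y) (\<lambda>y. H (z, y))"
    and H_le: "\<And>z. z \<in> space S \<Longrightarrow> (\<integral>y. H (z, y) \<partial>distr M T Y) \<le> R z"
    and R: "R \<in> borel_measurable S" "integrable M (\<lambda>\<omega>. R (Z \<omega>))"
  shows "(\<integral>\<omega>. H (Z \<omega>, Y \<omega>) \<partial>M) \<le> (\<integral>\<omega>. R (Z \<omega>) \<partial>M)"
proof -
  interpret Y_law: prob_space "distr M T Y"
    by (rule prob_space_distr[OF Y])
  have R_nonneg: "0 \<le> R z" if "z \<in> space S" for z
  proof -
    have "0 \<le> (\<integral>y. H (z, y) \<partial>distr M T Y)"
      using H(2) by simp
    then show ?thesis using H_le[OF that] by linarith
  qed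
  have "(\<integral>\<^sup>+ \<omega>. H (Z \<omega>, Y \<omega>) \<partial>M) = (\<integral>\<^sup>+ p. H p \<partial>distr M (S \<Otimes>\<^sub>M T) (\<lambda>\<omega>. (Z \<omega>, Y \<omega>)))"
    using Z Y H by (simp add: nn_integral_distr)
  also have "\<dots> = (\<integral>\<^sup>+ z. \<integral>\<^sup>+ y. H (z, y) \<partial>distr M T Y \<partial>distr M S Z)"
    unfolding product by (rule Y_law.nn_integral_fst[symmetric]) (use H in simp)
  also have "\<dots> \<le> (\<integral>\<^sup>+ z. R z \<partial>distr M S Z)"
  proof (rule nn_integral_mono)
    fix z assume "z \<in> space (distr M S Z)"
    then have "z \<in> space S" by simp
    then show "(\<integral>\<^sup>+ y. H (z, y) \<partial>distr M T Y) \<le> R z"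
      using H_integrable H_le H(2) by (simp add: nn_integral_eq_integral ennreal_leI)
  qed
  also have "\<dots> = (\<integral>\<^sup>+ \<omega>. R (Z \<omega>) \<partial>M)"
    using Z R by (simp add: nn_integral_distr)
  also have "\<dots> = ennreal (\<integral>\<omega>. R (Z \<omega>) \<partial>M)"
    using R Z R_nonneg by (intro nn_integral_eq_integral AE_I2) (auto simp: measurable_space)
  finally show ?thesis
    using R Z R_nonneg by (intro integral_real_bounded integral_nonneg) (auto simp: measurable_space)
qed

lemma (in prob_space) product_distribution_compose:
  assumes X: "random_variable S X" and Y: "random_variable T Y"
    and product: "distr M (S \<Otimes>\<^sub>M T) (\<lambda>\<omega>. (X \<omega>, Y \<omega>)) = distr M S X \<Otimes>\<^sub>M distr M T Y"
    and f: "f \<in> S \<rightarrow>\<^sub>M S'" and g: "g \<in> T \<rightarrow>\<^sub>M T'"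
  shows "distr M (S' \<Otimes>\<^sub>M T') (\<lambda>\<omega>. (f (X \<omega>), g (Y \<omega>)))
    = distr M S' (\<lambda>\<omega>. f (X \<omega>)) \<Otimes>\<^sub>M distr M T' (\<lambda>\<omega>. g (Y \<omega>))"
proof -
  have fX: "distr M S' (\<lambda>\<omega>. f (X \<omega>)) = distr (distr M S X) S' f"
    using X f by (simp add: distr_distr comp_def)
  have gY: "distr M T' (\<lambda>\<omega>. g (Y \<omega>)) = distr (distr M T Y) T' g"
    using Y g by (simp add: distr_distr comp_def)
  have "prob_space (distr M T' (\<lambda>\<omega>. g (Y \<omega>)))"
    using g Y by (intro prob_space_distr) simp
  then have "distr M S' (\<lambda>\<omega>. f (X \<omega>)) \<Otimes>\<^sub>M distr M T' (\<lambda>\<omega>. g (Y \<omega>))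
      = distr (distr M S X \<Otimes>\<^sub>M distr M T Y) (S' \<Otimes>\<^sub>M T') (\<lambda>(x, y). (f x, g y))"
    unfolding fX gY using f g
    by (intro pair_measure_distr) (simp_all add: prob_space_imp_sigma_finite)
  also have "\<dots> = distr M (S' \<Otimes>\<^sub>M T') (\<lambda>\<omega>. (f (X \<omega>), g (Y \<omega>)))"
    unfolding product[symmetric] using X Y f g by (subst distr_distr) (auto simp: comp_def)
  finally show ?thesis ..
qed

section \<open>Lipschitz stochastic gradient oracles\<close>

locale lipschitz_stochastic_gradient =
  fixes D :: "'s measure"
    and g :: "'x::euclidean_space \<Rightarrow> 'y::euclidean_space \<Rightarrow> 's \<Rightarrow> 'z::euclidean_space"
    and G :: "'x \<Rightarrow> 'y \<Rightarrow> 'z"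
    and L \<sigma> :: real
  assumes sample_prob_space: "prob_space D"
    and measurable: "(\<lambda>(p, s). g (fst p) (snd p) s) \<in> borel_measurable (borel \<Otimes>\<^sub>M D)"
    and lipschitz: "\<And>s x x' y y'. s \<in> space D \<Longrightarrow>
      norm (g x y s - g x' y' s) \<le> L * (norm (x - x') + norm (y - y'))"
    and integrable: "\<And>x y. integrable D (g x y)"
    and unbiased: "\<And>x y. G x y = (\<integral>s. g x y s \<partial>D)"
    and variance_integrable: "\<And>x y. integrable D (\<lambda>s. (norm (G x y - g x y s))\<^sup>2)"
    and variance_le: "\<And>x y. (\<integral>s. (norm (G x y - g x y s))\<^sup>2 \<partial>D) \<le> \<sigma>\<^sup>2"
begin

interpretation D: prob_space D by (rule sample_prob_space)

lemma measurable_g_comp [measurable]: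
  assumes "a \<in> borel_measurable N" "b \<in> borel_measurable N" "c \<in> N \<rightarrow>\<^sub>M D"
  shows "(\<lambda>\<omega>. g (a \<omega>) (b \<omega>) (c \<omega>)) \<in> borel_measurable N"
proof -
  have "(\<lambda>\<omega>. ((a \<omega>, b \<omega>), c \<omega>)) \<in> N \<rightarrow>\<^sub>M borel \<Otimes>\<^sub>M D"
    using assms by measurable
  from measurable_comp[OF this measurable] show ?thesis
    by (simp add: comp_def)
qed

lemma measurable_G_comp [measurable]:
  assumes "a \<in> borel_measurable N" "b \<in> borel_measurable N"
  shows "(\<lambda>\<omega>. G (a \<omega>) (b \<omega>)) \<in> borel_measurable N"
proof -
  have "(\<lambda>p. \<integral>s. g (fst p) (snd p) s \<partial>D) \<in> borel_measurable borel"
    using measurable by (intro D.borel_measurable_lebesgue_integral) simp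
  then have "(\<lambda>p. G (fst p) (snd p)) \<in> borel_measurable borel"
    by (simp add: unbiased)
  moreover have "(\<lambda>\<omega>. (a \<omega>, b \<omega>)) \<in> borel_measurable N"
    using assms by measurable
  ultimately show ?thesis
    using measurable_comp[of "\<lambda>\<omega>. (a \<omega>, b \<omega>)" N borel "\<lambda>p. G (fst p) (snd p)"]
    by (simp add: comp_def)
qed

lemma G_lipschitz: "norm (G x y - G x' y') \<le> L * (norm (x - x') + norm (y - y'))"
proof -
  have "norm (G x y - G x' y') = norm (\<integral>s. g x y s - g x' y' s \<partial>D)"
    using integrable by (simp add: unbiased)
  also have "\<dots> \<le> (\<integral>s. norm (g x y s - g x' y' s) \<partial>D)"
    by (rule integral_norm_bound)
  also have "\<dots> \<le> L * (norm (x - x') + norm (y - y'))"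
    using integrable lipschitz by (intro D.integral_le_const AE_I2) auto
  finally show ?thesis .
qed

lemma square_integrable_g: "square_integrable D (g x y)"
proof -
  have "square_integrable D (\<lambda>s. G x y - g x y s)"
    using integrable variance_integrable by (simp add: square_integrable_def)
  from square_integrable_diff[OF square_integrable_const[OF D.finite_measure_axioms, of "G x y"] this]
  show ?thesis by simp
qed

lemma square_integrable_g_comp:
  assumes \<xi>: "\<xi> \<in> M \<rightarrow>\<^sub>M D" "distr M D \<xi> = D"
    and a: "square_integrable M a" and b: "square_integrable M b"
  shows "square_integrable M (\<lambda>\<omega>. g (a \<omega>) (b \<omega>) (\<xi> \<omega>))"
proof (rule square_integrable_bound)
  from square_integrable_comp_distr[OF square_integrable_g \<xi>]
  show "square_integrable M (\<lambda>\<omega>. norm (g 0 0 (\<xi> \<omega>)) + L *\<^sub>R (norm (a \<omega>) + norm (b \<omega>)))"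
    by (intro square_integrable_add square_integrable_scaleR square_integrable_norm a b)
  show "(\<lambda>\<omega>. g (a \<omega>) (b \<omega>) (\<xi> \<omega>)) \<in> borel_measurable M"
    using a b \<xi> by (intro measurable_g_comp) (auto simp: square_integrable_def)
  fix \<omega> assume "\<omega> \<in> space M"
  then have "\<xi> \<omega> \<in> space D" using \<xi> by (simp add: measurable_space)
  have "norm (g (a \<omega>) (b \<omega>) (\<xi> \<omega>))
      \<le> norm (g 0 0 (\<xi> \<omega>)) + norm (g (a \<omega>) (b \<omega>) (\<xi> \<omega>) - g 0 0 (\<xi> \<omega>))"
    by (rule norm_triangle_sub)
  also have "\<dots> \<le> norm (g 0 0 (\<xi> \<omega>)) + L *\<^sub>R (norm (a \<omega>) + norm (b \<omega>))"
    using lipschitz[OF \<open>\<xi> \<omega> \<in> space D\<close>, of "a \<omega>" "b \<omega>" 0 0] by simp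
  also have "\<dots> \<le> norm (norm (g 0 0 (\<xi> \<omega>)) + L *\<^sub>R (norm (a \<omega>) + norm (b \<omega>)))"
    by (simp only: real_norm_def abs_ge_self)
  finally show "norm (g (a \<omega>) (b \<omega>) (\<xi> \<omega>))
      \<le> norm (norm (g 0 0 (\<xi> \<omega>)) + L *\<^sub>R (norm (a \<omega>) + norm (b \<omega>)))" .
qed

lemma square_integrable_G_comp:
  assumes M: "finite_measure M"
    and a: "square_integrable M a" and b: "square_integrable M b"
  shows "square_integrable M (\<lambda>\<omega>. G (a \<omega>) (b \<omega>))"
proof (rule square_integrable_bound)
  show "square_integrable M (\<lambda>\<omega>. norm (G 0 0) + L *\<^sub>R (norm (a \<omega>) + norm (b \<omega>)))"
    by (intro square_integrable_add square_integrable_scaleR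
        square_integrable_norm square_integrable_const M a b)
  show "(\<lambda>\<omega>. G (a \<omega>) (b \<omega>)) \<in> borel_measurable M"
    using a b by (intro measurable_G_comp) (auto simp: square_integrable_def)
  fix \<omega>
  have "norm (G (a \<omega>) (b \<omega>)) \<le> norm (G 0 0) + norm (G (a \<omega>) (b \<omega>) - G 0 0)"
    by (rule norm_triangle_sub)
  also have "\<dots> \<le> norm (G 0 0) + L *\<^sub>R (norm (a \<omega>) + norm (b \<omega>))"
    using G_lipschitz[of "a \<omega>" "b \<omega>" 0 0] by simp
  also have "\<dots> \<le> norm (norm (G 0 0) + L *\<^sub>R (norm (a \<omega>) + norm (b \<omega>)))"
    by (simp only: real_norm_def abs_ge_self)
  finally show "norm (G (a \<omega>) (b \<omega>)) \<le> norm (norm (G 0 0) + L *\<^sub>R (norm (a \<omega>) + norm (b \<omega>)))" .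
qed

lemma momentum_error_le:
  assumes a: "0 \<le> a" "a \<le> 1"
  shows "(\<integral>s. (norm (g x' y' s + (1 - a) *\<^sub>R (u - g x y s) - G x' y'))\<^sup>2 \<partial>D)
    \<le> (1 - a) * (norm (u - G x y))\<^sup>2 + 2 * a\<^sup>2 * \<sigma>\<^sup>2
      + 4 * L\<^sup>2 * ((norm (x' - x))\<^sup>2 + (norm (y' - y))\<^sup>2)"
proof -
  let ?K = "L * (norm (x' - x) + norm (y' - y))"
  have "(\<integral>s. (norm (g x' y' s + (1 - a) *\<^sub>R (u - g x y s) - G x' y'))\<^sup>2 \<partial>D)
      \<le> (1 - a) * (norm (u - G x y))\<^sup>2 + 2 * a\<^sup>2 * \<sigma>\<^sup>2 + 2 * (1 - a)\<^sup>2 * ?K\<^sup>2"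
  proof -
    have var: "(\<integral>s. (norm (g x' y' s - D.expectation (g x' y')))\<^sup>2 \<partial>D) \<le> \<sigma>\<^sup>2"
      using variance_le[of x' y'] by (simp add: unbiased[symmetric] norm_minus_commute)
    have "g x y \<in> borel_measurable D"
      using square_integrable_g by (rule square_integrableD)
    from D.momentum_update_error_le[OF square_integrable_g this lipschitz var a, of u]
    show ?thesis
      by (simp add: unbiased[symmetric])
  qed
  also have "2 * (1 - a)\<^sup>2 * ?K\<^sup>2 \<le> 4 * L\<^sup>2 * ((norm (x' - x))\<^sup>2 + (norm (y' - y))\<^sup>2)"
    using a by (rule damped_sum_squared_le)
  finally show ?thesis by simp
qed

lemma square_integrable_momentum_update:
  "square_integrable D (\<lambda>s. g x' y' s + (1 - a) *\<^sub>R (u - g x y s) - G x' y')"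
  by (intro square_integrable_add square_integrable_scaleR square_integrable_diff
      square_integrable_g square_integrable_const D.finite_measure_axioms)

lemma expected_momentum_error_le:
  fixes M :: "'a measure" and \<xi> :: "'a \<Rightarrow> 's"
    and X X' :: "'a \<Rightarrow> 'x" and Y Y' :: "'a \<Rightarrow> 'y" and U :: "'a \<Rightarrow> 'z"
  assumes M: "prob_space M" and \<xi>: "\<xi> \<in> M \<rightarrow>\<^sub>M D" "distr M D \<xi> = D"
    and X: "square_integrable M X" and Y: "square_integrable M Y"
    and X': "square_integrable M X'" and Y': "square_integrable M Y'"
    and U: "square_integrable M U"
    and indep: "distr M (borel \<Otimes>\<^sub>M D) (\<lambda>\<omega>. ((X \<omega>, Y \<omega>, X' \<omega>, Y' \<omega>, U \<omega>), \<xi> \<omega>))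
      = distr M borel (\<lambda>\<omega>. (X \<omega>, Y \<omega>, X' \<omega>, Y' \<omega>, U \<omega>)) \<Otimes>\<^sub>M D"
    and a: "0 \<le> a" "a \<le> 1"
  shows "(\<integral>\<omega>. (norm (g (X' \<omega>) (Y' \<omega>) (\<xi> \<omega>) + (1 - a) *\<^sub>R (U \<omega> - g (X \<omega>) (Y \<omega>) (\<xi> \<omega>))
        - G (X' \<omega>) (Y' \<omega>)))\<^sup>2 \<partial>M)
    \<le> (1 - a) * (\<integral>\<omega>. (norm (U \<omega> - G (X \<omega>) (Y \<omega>)))\<^sup>2 \<partial>M) + 2 * a\<^sup>2 * \<sigma>\<^sup>2
      + 4 * L\<^sup>2 * (\<integral>\<omega>. (norm (X' \<omega> - X \<omega>))\<^sup>2 + (norm (Y' \<omega> - Y \<omega>))\<^sup>2 \<partial>M)"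
proof -
  interpret M: prob_space M by (rule M)
  define err :: "('x \<times> 'y \<times> 'x \<times> 'y \<times> 'z) \<times> 's \<Rightarrow> real" where
    "err = (\<lambda>(z, s). case z of (x, y, x', y', u) \<Rightarrow>
      (norm (g x' y' s + (1 - a) *\<^sub>R (u - g x y s) - G x' y'))\<^sup>2)"
  define err_bound :: "'x \<times> 'y \<times> 'x \<times> 'y \<times> 'z \<Rightarrow> real" where
    "err_bound = (\<lambda>(x, y, x', y', u). (1 - a) * (norm (u - G x y))\<^sup>2 + 2 * a\<^sup>2 * \<sigma>\<^sup>2
      + 4 * L\<^sup>2 * ((norm (x' - x))\<^sup>2 + (norm (y' - y))\<^sup>2))"
  have Z: "square_integrable M (\<lambda>\<omega>. (X \<omega>, Y \<omega>, X' \<omega>, Y' \<omega>, U \<omega>))"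
    by (intro square_integrable_Pair X Y X' Y' U)
  have errors: "square_integrable M (\<lambda>\<omega>. U \<omega> - G (X \<omega>) (Y \<omega>))"
    "square_integrable M (\<lambda>\<omega>. X' \<omega> - X \<omega>)" "square_integrable M (\<lambda>\<omega>. Y' \<omega> - Y \<omega>)"
    by (intro square_integrable_diff square_integrable_G_comp M.finite_measure_axioms U X Y X' Y')+
  have "(\<integral>\<omega>. err ((X \<omega>, Y \<omega>, X' \<omega>, Y' \<omega>, U \<omega>), \<xi> \<omega>) \<partial>M)
      \<le> (\<integral>\<omega>. err_bound (X \<omega>, Y \<omega>, X' \<omega>, Y' \<omega>, U \<omega>) \<partial>M)"
  proof (rule M.expectation_le_of_product_distribution)
    show "(\<lambda>\<omega>. (X \<omega>, Y \<omega>, X' \<omega>, Y' \<omega>, U \<omega>)) \<in> borel_measurable M"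
      using Z by (rule square_integrableD)
    show "distr M (borel \<Otimes>\<^sub>M D) (\<lambda>\<omega>. ((X \<omega>, Y \<omega>, X' \<omega>, Y' \<omega>, U \<omega>), \<xi> \<omega>))
      = distr M borel (\<lambda>\<omega>. (X \<omega>, Y \<omega>, X' \<omega>, Y' \<omega>, U \<omega>)) \<Otimes>\<^sub>M distr M D \<xi>"
      using indep \<xi>(2) by simp
    show "err \<in> borel_measurable (borel \<Otimes>\<^sub>M D)"
      unfolding err_def by measurable
    show "err_bound \<in> borel_measurable borel"
      unfolding err_bound_def by measurable
    fix z :: "'x \<times> 'y \<times> 'x \<times> 'y \<times> 'z"
    obtain x y x' y' u where z: "z = (x, y, x', y', u)"
      by (cases z) auto
    show "integrable (distr M D \<xi>) (\<lambda>s. err (z, s))"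
      using square_integrable_momentum_update \<xi>(2) by (simp add: err_def z square_integrable_def)
    show "(\<integral>s. err (z, s) \<partial>distr M D \<xi>) \<le> err_bound z"
      using momentum_error_le[OF a] \<xi>(2) by (simp add: err_def err_bound_def z)
  next
    show "integrable M (\<lambda>\<omega>. err_bound (X \<omega>, Y \<omega>, X' \<omega>, Y' \<omega>, U \<omega>))"
      using errors by (simp add: err_bound_def square_integrable_def)
  qed (simp_all add: \<xi>(1) err_def split: prod.split)
  then show ?thesis
    using errors by (simp add: err_def err_bound_def square_integrable_def M.prob_space)
qed

end

section \<open>The MSGDA iterates\<close>

lemma msgda_Suc:
  fixes gx :: "'x::real_vector \<Rightarrow> 'y::real_vector \<Rightarrow> 's \<Rightarrow> 'x" and gy :: "'x \<Rightarrow> 'y \<Rightarrow> 's \<Rightarrow> 'y"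
    and \<gamma> lam :: real and \<eta> \<alpha> \<beta> :: "nat \<Rightarrow> real" and x1 :: 'x and y1 :: 'y and s :: "nat \<Rightarrow> 's"
  defines "x \<equiv> msgda_x gx gy \<gamma> lam \<eta> \<alpha> \<beta> x1 y1 s" and "y \<equiv> msgda_y gx gy \<gamma> lam \<eta> \<alpha> \<beta> x1 y1 s"
    and "v \<equiv> msgda_v gx gy \<gamma> lam \<eta> \<alpha> \<beta> x1 y1 s" and "w \<equiv> msgda_w gx gy \<gamma> lam \<eta> \<alpha> \<beta> x1 y1 s"
  assumes "1 \<le> n"
  shows "x (Suc n) = x n - (\<eta> n * \<gamma>) *\<^sub>R w n"
    and "y (Suc n) = y n + (\<eta> n * lam) *\<^sub>R v n"
    and "v (Suc n) = gy (x (Suc n)) (y (Suc n)) (s (Suc n))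
      + (1 - \<alpha> (Suc n)) *\<^sub>R (v n - gy (x n) (y n) (s (Suc n)))"
    and "w (Suc n) = gx (x (Suc n)) (y (Suc n)) (s (Suc n))
      + (1 - \<beta> (Suc n)) *\<^sub>R (w n - gx (x n) (y n) (s (Suc n)))"
  using assms unfolding x_def y_def v_def w_def msgda_x_def msgda_y_def msgda_v_def msgda_w_def
  by (auto simp: Let_def algebra_simps split: prod.split dest!: Suc_le_D)

lemma msgda_x_Suc_eq_step:
  "1 \<le> n \<Longrightarrow> msgda_x gx gy \<gamma> lam \<eta> \<alpha> \<beta> x1 y1 s (Suc n) - msgda_x gx gy \<gamma> lam \<eta> \<alpha> \<beta> x1 y1 s n
    = \<eta> n *\<^sub>R (msgda_xtil gx gy \<gamma> lam \<eta> \<alpha> \<beta> x1 y1 s (Suc n) - msgda_x gx gy \<gamma> lam \<eta> \<alpha> \<beta> x1 y1 s n)"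
  by (simp add: msgda_Suc(1))

lemma msgda_y_Suc_eq_step:
  "1 \<le> n \<Longrightarrow> msgda_y gx gy \<gamma> lam \<eta> \<alpha> \<beta> x1 y1 s (Suc n) - msgda_y gx gy \<gamma> lam \<eta> \<alpha> \<beta> x1 y1 s n
    = \<eta> n *\<^sub>R (msgda_ytil gx gy \<gamma> lam \<eta> \<alpha> \<beta> x1 y1 s (Suc n) - msgda_y gx gy \<gamma> lam \<eta> \<alpha> \<beta> x1 y1 s n)"
  by (simp add: msgda_Suc(2))

lemma msgda_cong:
  assumes "1 \<le> n" "\<And>i. 1 \<le> i \<Longrightarrow> i \<le> n \<Longrightarrow> s i = s' i"
  shows "msgda gx gy \<gamma> lam \<eta> \<alpha> \<beta> x1 y1 s n = msgda gx gy \<gamma> lam \<eta> \<alpha> \<beta> x1 y1 s' n"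
  using assms
proof (induction n rule: nat_induct_at_least)
  case base
  then show ?case by simp
next
  case (Suc n)
  then have "msgda gx gy \<gamma> lam \<eta> \<alpha> \<beta> x1 y1 s n = msgda gx gy \<gamma> lam \<eta> \<alpha> \<beta> x1 y1 s' n"
    by simp
  moreover obtain m where "n = Suc m"
    using Suc.hyps by (cases n) auto
  ultimately show ?case
    using Suc.prems by simp
qed

lemma msgda_eq_components:
  "msgda gx gy \<gamma> lam \<eta> \<alpha> \<beta> x1 y1 s n =
    (msgda_x gx gy \<gamma> lam \<eta> \<alpha> \<beta> x1 y1 s n, msgda_y gx gy \<gamma> lam \<eta> \<alpha> \<beta> x1 y1 s n,
     msgda_v gx gy \<gamma> lam \<eta> \<alpha> \<beta> x1 y1 s n, msgda_w gx gy \<gamma> lam \<eta> \<alpha> \<beta> x1 y1 s n)"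
  by (simp add: msgda_x_def msgda_y_def msgda_v_def msgda_w_def)

locale msgda_setting = prob_space M
  for M :: "'a measure" +
  fixes D :: "'s measure" and \<xi> :: "nat \<Rightarrow> 'a \<Rightarrow> 's"
    and gx :: "'x::euclidean_space \<Rightarrow> 'y::euclidean_space \<Rightarrow> 's \<Rightarrow> 'x"
    and gy :: "'x \<Rightarrow> 'y \<Rightarrow> 's \<Rightarrow> 'y"
    and Gx :: "'x \<Rightarrow> 'y \<Rightarrow> 'x" and Gy :: "'x \<Rightarrow> 'y \<Rightarrow> 'y"
    and \<gamma> lam Lf \<sigma> :: real and \<eta> \<alpha> \<beta> :: "nat \<Rightarrow> real" and x1 :: 'x and y1 :: 'y
  assumes iid_indep: "indep_vars (\<lambda>_. D) \<xi> {1..}"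
    and iid_distr: "\<forall>i\<ge>1. distr M D (\<xi> i) = D"
    and gx_meas: "(\<lambda>(z, s). gx (fst z) (snd z) s) \<in> borel_measurable (borel \<Otimes>\<^sub>M D)"
    and gy_meas: "(\<lambda>(z, s). gy (fst z) (snd z) s) \<in> borel_measurable (borel \<Otimes>\<^sub>M D)"
    and A2_gx: "\<forall>s\<in>space D. \<forall>x x' y y'.
        norm (gx x y s - gx x' y s) \<le> Lf * norm (x - x') \<and>
        norm (gx x y s - gx x y' s) \<le> Lf * norm (y - y')"
    and A2_gy: "\<forall>s\<in>space D. \<forall>x x' y y'.
        norm (gy x y s - gy x' y s) \<le> Lf * norm (x - x') \<and>
        norm (gy x y s - gy x y' s) \<le> Lf * norm (y - y')"
    and A3_unbiased: "\<forall>x y. integrable D (gx x y) \<and> integrable D (gy x y) \<and>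
        Gx x y = (\<integral>s. gx x y s \<partial>D) \<and> Gy x y = (\<integral>s. gy x y s \<partial>D)"
    and A3_var: "\<forall>x y.
        integrable D (\<lambda>s. (norm ((Gx x y, Gy x y) - (gx x y s, gy x y s)))\<^sup>2) \<and>
        (\<integral>s. (norm ((Gx x y, Gy x y) - (gx x y s, gy x y s)))\<^sup>2 \<partial>D) \<le> \<sigma>\<^sup>2"
begin

lemma sample_measurable: "1 \<le> i \<Longrightarrow> \<xi> i \<in> M \<rightarrow>\<^sub>M D"
  using iid_indep by (simp add: indep_vars_def)

lemma sample_distr: "1 \<le> i \<Longrightarrow> distr M D (\<xi> i) = D"
  using iid_distr by simp

lemma sample_prob_space: "prob_space D"
  using prob_space_distr[OF sample_measurable[of 1]] sample_distr[of 1] by simp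

lemma variance_components:
  "square_integrable D (\<lambda>s. Gx x y - gx x y s)" "square_integrable D (\<lambda>s. Gy x y - gy x y s)"
  "(\<integral>s. (norm (Gx x y - gx x y s))\<^sup>2 \<partial>D) \<le> \<sigma>\<^sup>2" "(\<integral>s. (norm (Gy x y - gy x y s))\<^sup>2 \<partial>D) \<le> \<sigma>\<^sup>2"
proof -
  have "(\<lambda>s. ((x, y), s)) \<in> D \<rightarrow>\<^sub>M borel \<Otimes>\<^sub>M D"
    by simp
  from measurable_comp[OF this gx_meas] measurable_comp[OF this gy_meas]
  have "(\<lambda>s. (Gx x y - gx x y s, Gy x y - gy x y s)) \<in> borel_measurable D"
    by (simp add: comp_def borel_prod[symmetric])
  then have pair: "square_integrable D (\<lambda>s. (Gx x y - gx x y s, Gy x y - gy x y s))"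
    using A3_var by (simp add: square_integrable_def)
  from square_integrable_fst[OF pair] square_integrable_snd[OF pair]
  show x: "square_integrable D (\<lambda>s. Gx x y - gx x y s)"
    and y: "square_integrable D (\<lambda>s. Gy x y - gy x y s)"
    by simp_all
  have "(\<integral>s. (norm (Gx x y - gx x y s))\<^sup>2 \<partial>D) + (\<integral>s. (norm (Gy x y - gy x y s))\<^sup>2 \<partial>D) \<le> \<sigma>\<^sup>2"
    using conjunct2[OF A3_var[rule_format, of x y]] integral_norm_Pair_squared[OF x y] by simp
  moreover have "0 \<le> (\<integral>s. (norm (Gx x y - gx x y s))\<^sup>2 \<partial>D)" "0 \<le> (\<integral>s. (norm (Gy x y - gy x y s))\<^sup>2 \<partial>D)"
    by simp_all
  ultimately show "(\<integral>s. (norm (Gx x y - gx x y s))\<^sup>2 \<partial>D) \<le> \<sigma>\<^sup>2"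
    "(\<integral>s. (norm (Gy x y - gy x y s))\<^sup>2 \<partial>D) \<le> \<sigma>\<^sup>2"
    by linarith+
qed

sublocale grad_x: lipschitz_stochastic_gradient D gx Gx Lf \<sigma>
proof (rule lipschitz_stochastic_gradient.intro)
  show "norm (gx x y s - gx x' y' s) \<le> Lf * (norm (x - x') + norm (y - y'))" if "s \<in> space D" for s x x' y y'
    using A2_gx that by (intro norm_diff_le_of_separately_lipschitz[where h = "\<lambda>x y. gx x y s"]) auto
  show "integrable D (\<lambda>s. (norm (Gx x y - gx x y s))\<^sup>2)" for x y
    using variance_components(1) by (simp add: square_integrable_def)
  show "(\<integral>s. (norm (Gx x y - gx x y s))\<^sup>2 \<partial>D) \<le> \<sigma>\<^sup>2" for x y
    by (rule variance_components(3))
  show "integrable D (gx x y)" "Gx x y = (\<integral>s. gx x y s \<partial>D)" for x y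
    using A3_unbiased by simp_all
qed (fact sample_prob_space gx_meas)+

sublocale grad_y: lipschitz_stochastic_gradient D gy Gy Lf \<sigma>
proof (rule lipschitz_stochastic_gradient.intro)
  show "norm (gy x y s - gy x' y' s) \<le> Lf * (norm (x - x') + norm (y - y'))" if "s \<in> space D" for s x x' y y'
    using A2_gy that by (intro norm_diff_le_of_separately_lipschitz[where h = "\<lambda>x y. gy x y s"]) auto
  show "integrable D (\<lambda>s. (norm (Gy x y - gy x y s))\<^sup>2)" for x y
    using variance_components(2) by (simp add: square_integrable_def)
  show "(\<integral>s. (norm (Gy x y - gy x y s))\<^sup>2 \<partial>D) \<le> \<sigma>\<^sup>2" for x y
    by (rule variance_components(4))
  show "integrable D (gy x y)" "Gy x y = (\<integral>s. gy x y s \<partial>D)" for x y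
    using A3_unbiased by simp_all
qed (fact sample_prob_space gy_meas)+

lemma measurable_msgda:
  assumes n: "1 \<le> n" and s: "\<And>i. 1 \<le> i \<Longrightarrow> i \<le> n \<Longrightarrow> (\<lambda>\<omega>. s \<omega> i) \<in> N \<rightarrow>\<^sub>M D"
  shows "(\<lambda>\<omega>. msgda gx gy \<gamma> lam \<eta> \<alpha> \<beta> x1 y1 (s \<omega>) n) \<in> borel_measurable N"
proof -
  have "(\<lambda>\<omega>. msgda_x gx gy \<gamma> lam \<eta> \<alpha> \<beta> x1 y1 (s \<omega>) n) \<in> borel_measurable N
    \<and> (\<lambda>\<omega>. msgda_y gx gy \<gamma> lam \<eta> \<alpha> \<beta> x1 y1 (s \<omega>) n) \<in> borel_measurable N
    \<and> (\<lambda>\<omega>. msgda_v gx gy \<gamma> lam \<eta> \<alpha> \<beta> x1 y1 (s \<omega>) n) \<in> borel_measurable N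
    \<and> (\<lambda>\<omega>. msgda_w gx gy \<gamma> lam \<eta> \<alpha> \<beta> x1 y1 (s \<omega>) n) \<in> borel_measurable N"
    using n s
  proof (induction n rule: nat_induct_at_least)
    case base
    then have [measurable]: "(\<lambda>\<omega>. s \<omega> (Suc 0)) \<in> N \<rightarrow>\<^sub>M D"
      by simp
    show ?case
      by (simp add: msgda_x_def msgda_y_def msgda_v_def msgda_w_def)
  next
    case (Suc n)
    then have [measurable]:
      "(\<lambda>\<omega>. msgda_x gx gy \<gamma> lam \<eta> \<alpha> \<beta> x1 y1 (s \<omega>) n) \<in> borel_measurable N"
      "(\<lambda>\<omega>. msgda_y gx gy \<gamma> lam \<eta> \<alpha> \<beta> x1 y1 (s \<omega>) n) \<in> borel_measurable N"
      "(\<lambda>\<omega>. msgda_v gx gy \<gamma> lam \<eta> \<alpha> \<beta> x1 y1 (s \<omega>) n) \<in> borel_measurable N"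
      "(\<lambda>\<omega>. msgda_w gx gy \<gamma> lam \<eta> \<alpha> \<beta> x1 y1 (s \<omega>) n) \<in> borel_measurable N"
      "(\<lambda>\<omega>. s \<omega> (Suc n)) \<in> N \<rightarrow>\<^sub>M D"
      by simp_all
    show ?case
      by (simp add: msgda_Suc[OF Suc.hyps])
  qed
  then show ?thesis
    unfolding msgda_eq_components by (intro borel_measurable_Pair) auto
qed

lemma square_integrable_msgda:
  assumes "1 \<le> n"
  shows "square_integrable M (\<lambda>\<omega>. msgda gx gy \<gamma> lam \<eta> \<alpha> \<beta> x1 y1 (\<lambda>i. \<xi> i \<omega>) n)"
proof -
  note const = square_integrable_const[OF finite_measure_axioms]
  note grad_comp = grad_x.square_integrable_g_comp[OF sample_measurable sample_distr]
    grad_y.square_integrable_g_comp[OF sample_measurable sample_distr]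
  have "square_integrable M (\<lambda>\<omega>. msgda_x gx gy \<gamma> lam \<eta> \<alpha> \<beta> x1 y1 (\<lambda>i. \<xi> i \<omega>) n)
    \<and> square_integrable M (\<lambda>\<omega>. msgda_y gx gy \<gamma> lam \<eta> \<alpha> \<beta> x1 y1 (\<lambda>i. \<xi> i \<omega>) n)
    \<and> square_integrable M (\<lambda>\<omega>. msgda_v gx gy \<gamma> lam \<eta> \<alpha> \<beta> x1 y1 (\<lambda>i. \<xi> i \<omega>) n)
    \<and> square_integrable M (\<lambda>\<omega>. msgda_w gx gy \<gamma> lam \<eta> \<alpha> \<beta> x1 y1 (\<lambda>i. \<xi> i \<omega>) n)"
    using assms
  proof (induction n rule: nat_induct_at_least)
    case base
    show ?case
      unfolding msgda_x_def msgda_y_def msgda_v_def msgda_w_def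
      by (simp add: const grad_comp)
  next
    case (Suc n)
    then have x: "square_integrable M (\<lambda>\<omega>. msgda_x gx gy \<gamma> lam \<eta> \<alpha> \<beta> x1 y1 (\<lambda>i. \<xi> i \<omega>) n)"
      and y: "square_integrable M (\<lambda>\<omega>. msgda_y gx gy \<gamma> lam \<eta> \<alpha> \<beta> x1 y1 (\<lambda>i. \<xi> i \<omega>) n)"
      and v: "square_integrable M (\<lambda>\<omega>. msgda_v gx gy \<gamma> lam \<eta> \<alpha> \<beta> x1 y1 (\<lambda>i. \<xi> i \<omega>) n)"
      and w: "square_integrable M (\<lambda>\<omega>. msgda_w gx gy \<gamma> lam \<eta> \<alpha> \<beta> x1 y1 (\<lambda>i. \<xi> i \<omega>) n)"
      by simp_all
    have x': "square_integrable M (\<lambda>\<omega>. msgda_x gx gy \<gamma> lam \<eta> \<alpha> \<beta> x1 y1 (\<lambda>i. \<xi> i \<omega>) (Suc n))"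
      unfolding msgda_Suc(1)[OF Suc.hyps] by (intro square_integrable_diff square_integrable_scaleR x w)
    have y': "square_integrable M (\<lambda>\<omega>. msgda_y gx gy \<gamma> lam \<eta> \<alpha> \<beta> x1 y1 (\<lambda>i. \<xi> i \<omega>) (Suc n))"
      unfolding msgda_Suc(2)[OF Suc.hyps] by (intro square_integrable_add square_integrable_scaleR y v)
    show ?case
      unfolding msgda_Suc(3,4)[OF Suc.hyps]
      by (intro conjI x' y' square_integrable_add square_integrable_diff square_integrable_scaleR
          grad_comp x y v w) simp_all
  qed
  then show ?thesis
    unfolding msgda_eq_components by (intro square_integrable_Pair) simp_all
qed

lemma msgda_sample_product_distribution:
  assumes n: "1 \<le> n" and f: "f \<in> borel \<rightarrow>\<^sub>M borel"
  shows "distr M (borel \<Otimes>\<^sub>M D) (\<lambda>\<omega>. (f (msgda gx gy \<gamma> lam \<eta> \<alpha> \<beta> x1 y1 (\<lambda>i. \<xi> i \<omega>) n), \<xi> (Suc n) \<omega>))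
    = distr M borel (\<lambda>\<omega>. f (msgda gx gy \<gamma> lam \<eta> \<alpha> \<beta> x1 y1 (\<lambda>i. \<xi> i \<omega>) n)) \<Otimes>\<^sub>M D"
proof -
  define history where "history \<omega> = restrict (\<lambda>i. \<xi> i \<omega>) {1..n}" for \<omega>
  define fresh where "fresh \<omega> = restrict (\<lambda>i. \<xi> i \<omega>) {Suc n}" for \<omega>
  have "indep_var (PiM {1..n} (\<lambda>_. D)) history (PiM {Suc n} (\<lambda>_. D)) fresh"
    unfolding history_def fresh_def by (rule indep_var_restrict[OF iid_indep]) auto
  then have history: "random_variable (PiM {1..n} (\<lambda>_. D)) history"
    and fresh: "random_variable (PiM {Suc n} (\<lambda>_. D)) fresh"
    and product: "distr M (PiM {1..n} (\<lambda>_. D) \<Otimes>\<^sub>M PiM {Suc n} (\<lambda>_. D)) (\<lambda>\<omega>. (history \<omega>, fresh \<omega>))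
      = distr M (PiM {1..n} (\<lambda>_. D)) history \<Otimes>\<^sub>M distr M (PiM {Suc n} (\<lambda>_. D)) fresh"
    by (simp_all add: indep_var_distribution_eq)
  have "(\<lambda>s. msgda gx gy \<gamma> lam \<eta> \<alpha> \<beta> x1 y1 s n) \<in> borel_measurable (PiM {1..n} (\<lambda>_. D))"
    using n by (intro measurable_msgda) auto
  with f have F: "(\<lambda>s. f (msgda gx gy \<gamma> lam \<eta> \<alpha> \<beta> x1 y1 s n)) \<in> PiM {1..n} (\<lambda>_. D) \<rightarrow>\<^sub>M borel"
    by measurable
  have S: "(\<lambda>s. s (Suc n)) \<in> PiM {Suc n} (\<lambda>_. D) \<rightarrow>\<^sub>M D"
    by (rule measurable_component_singleton) simp
  have "msgda gx gy \<gamma> lam \<eta> \<alpha> \<beta> x1 y1 (history \<omega>) n = msgda gx gy \<gamma> lam \<eta> \<alpha> \<beta> x1 y1 (\<lambda>i. \<xi> i \<omega>) n" for \<omega>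
    using n by (intro msgda_cong) (auto simp: history_def)
  moreover have "fresh \<omega> (Suc n) = \<xi> (Suc n) \<omega>" for \<omega>
    by (simp add: fresh_def)
  ultimately show ?thesis
    using product_distribution_compose[OF history fresh product F S] sample_distr[of "Suc n"] by simp
qed

abbreviation "x_iter n \<omega> \<equiv> msgda_x gx gy \<gamma> lam \<eta> \<alpha> \<beta> x1 y1 (\<lambda>i. \<xi> i \<omega>) n"
abbreviation "y_iter n \<omega> \<equiv> msgda_y gx gy \<gamma> lam \<eta> \<alpha> \<beta> x1 y1 (\<lambda>i. \<xi> i \<omega>) n"
abbreviation "v_iter n \<omega> \<equiv> msgda_v gx gy \<gamma> lam \<eta> \<alpha> \<beta> x1 y1 (\<lambda>i. \<xi> i \<omega>) n"
abbreviation "w_iter n \<omega> \<equiv> msgda_w gx gy \<gamma> lam \<eta> \<alpha> \<beta> x1 y1 (\<lambda>i. \<xi> i \<omega>) n"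
abbreviation "xtil_iter n \<omega> \<equiv> msgda_xtil gx gy \<gamma> lam \<eta> \<alpha> \<beta> x1 y1 (\<lambda>i. \<xi> i \<omega>) n"
abbreviation "ytil_iter n \<omega> \<equiv> msgda_ytil gx gy \<gamma> lam \<eta> \<alpha> \<beta> x1 y1 (\<lambda>i. \<xi> i \<omega>) n"

lemma square_integrable_iterates:
  assumes "1 \<le> n"
  shows "square_integrable M (x_iter n)" "square_integrable M (y_iter n)"
    "square_integrable M (v_iter n)" "square_integrable M (w_iter n)"
proof -
  note iterate = square_integrable_msgda[OF assms, unfolded msgda_eq_components]
  note rest = square_integrable_snd[OF iterate]
  note rest' = square_integrable_snd[OF rest]
  show "square_integrable M (x_iter n)" "square_integrable M (y_iter n)"
    "square_integrable M (v_iter n)" "square_integrable M (w_iter n)"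
    using square_integrable_fst[OF iterate] square_integrable_fst[OF rest]
      square_integrable_fst[OF rest'] square_integrable_snd[OF rest'] by simp_all
qed

lemma iterate_displacement:
  assumes "1 \<le> t"
  shows "(\<integral>\<omega>. (norm (x_iter (Suc t) \<omega> - x_iter t \<omega>))\<^sup>2 + (norm (y_iter (Suc t) \<omega> - y_iter t \<omega>))\<^sup>2 \<partial>M)
    = (\<eta> t)\<^sup>2 * (\<integral>\<omega>. (norm (xtil_iter (Suc t) \<omega> - x_iter t \<omega>))\<^sup>2
        + (norm (ytil_iter (Suc t) \<omega> - y_iter t \<omega>))\<^sup>2 \<partial>M)"
proof -
  have "(norm (x_iter (Suc t) \<omega> - x_iter t \<omega>))\<^sup>2 + (norm (y_iter (Suc t) \<omega> - y_iter t \<omega>))\<^sup>2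
    = (\<eta> t)\<^sup>2 * ((norm (xtil_iter (Suc t) \<omega> - x_iter t \<omega>))\<^sup>2
        + (norm (ytil_iter (Suc t) \<omega> - y_iter t \<omega>))\<^sup>2)" for \<omega>
    unfolding msgda_x_Suc_eq_step[OF assms] msgda_y_Suc_eq_step[OF assms]
    by (simp add: power_mult_distrib distrib_left)
  then show ?thesis
    by simp
qed

lemma iterates_sample_product_distribution:
  assumes t: "1 \<le> t"
  shows "distr M (borel \<Otimes>\<^sub>M D)
      (\<lambda>\<omega>. ((x_iter t \<omega>, y_iter t \<omega>, x_iter (Suc t) \<omega>, y_iter (Suc t) \<omega>, v_iter t \<omega>), \<xi> (Suc t) \<omega>))
    = distr M borel (\<lambda>\<omega>. (x_iter t \<omega>, y_iter t \<omega>, x_iter (Suc t) \<omega>, y_iter (Suc t) \<omega>, v_iter t \<omega>)) \<Otimes>\<^sub>M D"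
    (is ?v_law)
    and "distr M (borel \<Otimes>\<^sub>M D)
      (\<lambda>\<omega>. ((x_iter t \<omega>, y_iter t \<omega>, x_iter (Suc t) \<omega>, y_iter (Suc t) \<omega>, w_iter t \<omega>), \<xi> (Suc t) \<omega>))
    = distr M borel (\<lambda>\<omega>. (x_iter t \<omega>, y_iter t \<omega>, x_iter (Suc t) \<omega>, y_iter (Suc t) \<omega>, w_iter t \<omega>)) \<Otimes>\<^sub>M D"
    (is ?w_law)
proof -
  define next_point where "next_point z = (fst z - (\<eta> t * \<gamma>) *\<^sub>R snd (snd (snd z)),
    fst (snd z) + (\<eta> t * lam) *\<^sub>R fst (snd (snd z)))" for z :: "'x \<times> 'y \<times> 'y \<times> 'x"
  have [measurable]: "next_point \<in> borel_measurable borel"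
    unfolding next_point_def by measurable
  note law = msgda_sample_product_distribution[OF t]
  show ?v_law
    using law[of "\<lambda>z. (fst z, fst (snd z), fst (next_point z), snd (next_point z), fst (snd (snd z)))"]
    by (simp add: msgda_eq_components msgda_Suc[OF t] next_point_def)
  show ?w_law
    using law[of "\<lambda>z. (fst z, fst (snd z), fst (next_point z), snd (next_point z), snd (snd (snd z)))"]
    by (simp add: msgda_eq_components msgda_Suc[OF t] next_point_def)
qed

lemma v_tracking_error_le:
  assumes t: "1 \<le> t" and a: "0 \<le> \<alpha> (t + 1)" "\<alpha> (t + 1) \<le> 1"
  shows "(\<integral>\<omega>. (norm (v_iter (t + 1) \<omega> - Gy (x_iter (t + 1) \<omega>) (y_iter (t + 1) \<omega>)))\<^sup>2 \<partial>M)
    \<le> (1 - \<alpha> (t + 1)) * (\<integral>\<omega>. (norm (v_iter t \<omega> - Gy (x_iter t \<omega>) (y_iter t \<omega>)))\<^sup>2 \<partial>M)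
      + 2 * (\<alpha> (t + 1))\<^sup>2 * \<sigma>\<^sup>2
      + 4 * Lf\<^sup>2 * (\<eta> t)\<^sup>2 * (\<integral>\<omega>. (norm (xtil_iter (t + 1) \<omega> - x_iter t \<omega>))\<^sup>2
          + (norm (ytil_iter (t + 1) \<omega> - y_iter t \<omega>))\<^sup>2 \<partial>M)"
proof -
  have t': "1 \<le> Suc t"
    by simp
  note iterate = square_integrable_iterates[OF t] and next_iterate = square_integrable_iterates[OF t']
  from grad_y.expected_momentum_error_le[OF prob_space_axioms sample_measurable[OF t'] sample_distr[OF t']
      iterate(1,2) next_iterate(1,2) iterate(3) iterates_sample_product_distribution(1)[OF t]] a
  show ?thesis
    using iterate_displacement[OF t] by (simp add: msgda_Suc(3)[OF t] mult.assoc)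
qed

lemma w_tracking_error_le:
  assumes t: "1 \<le> t" and b: "0 \<le> \<beta> (t + 1)" "\<beta> (t + 1) \<le> 1"
  shows "(\<integral>\<omega>. (norm (w_iter (t + 1) \<omega> - Gx (x_iter (t + 1) \<omega>) (y_iter (t + 1) \<omega>)))\<^sup>2 \<partial>M)
    \<le> (1 - \<beta> (t + 1)) * (\<integral>\<omega>. (norm (w_iter t \<omega> - Gx (x_iter t \<omega>) (y_iter t \<omega>)))\<^sup>2 \<partial>M)
      + 2 * (\<beta> (t + 1))\<^sup>2 * \<sigma>\<^sup>2
      + 4 * Lf\<^sup>2 * (\<eta> t)\<^sup>2 * (\<integral>\<omega>. (norm (xtil_iter (t + 1) \<omega> - x_iter t \<omega>))\<^sup>2
          + (norm (ytil_iter (t + 1) \<omega> - y_iter t \<omega>))\<^sup>2 \<partial>M)"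
proof -
  have t': "1 \<le> Suc t"
    by simp
  note iterate = square_integrable_iterates[OF t] and next_iterate = square_integrable_iterates[OF t']
  from grad_x.expected_momentum_error_le[OF prob_space_axioms sample_measurable[OF t'] sample_distr[OF t']
      iterate(1,2) next_iterate(1,2) iterate(4) iterates_sample_product_distribution(2)[OF t]] b
  show ?thesis
    using iterate_displacement[OF t] by (simp add: msgda_Suc(4)[OF t] mult.assoc)
qed

end

theorem lemma6:
  fixes M :: "'a measure" and D :: "'s measure"
    and \<xi> :: "nat \<Rightarrow> 'a \<Rightarrow> 's"
    and F :: "real^'d \<Rightarrow> real^'p \<Rightarrow> 's \<Rightarrow> real"
    and gx :: "real^'d \<Rightarrow> real^'p \<Rightarrow> 's \<Rightarrow> real^'d"
    and gy :: "real^'d \<Rightarrow> real^'p \<Rightarrow> 's \<Rightarrow> real^'p"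
    and Gx :: "real^'d \<Rightarrow> real^'p \<Rightarrow> real^'d"
    and Gy :: "real^'d \<Rightarrow> real^'p \<Rightarrow> real^'p"
    and \<gamma> lam Lf \<sigma> :: real and \<eta> \<alpha> \<beta> :: "nat \<Rightarrow> real"
    and x1 :: "real^'d" and y1 :: "real^'p" and t :: nat
  assumes M: "prob_space M"
    and iid_indep: "prob_space.indep_vars M (\<lambda>_. D) \<xi> {1..}"
    and iid_distr: "\<forall>i\<ge>1. distr M D (\<xi> i) = D"
    and pos: "\<gamma> > 0" "lam > 0" "\<forall>k. \<eta> k > 0"
    and steps: "\<forall>k. 0 < \<alpha> k \<and> \<alpha> k \<le> 1" "\<forall>k. 0 < \<beta> k \<and> \<beta> k \<le> 1"
    \<comment> \<open>f(x,y;xi) is differentiable with partial gradients gx, gy\<close>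
    and F_grad: "\<forall>s\<in>space D. \<forall>x y. ((\<lambda>z. F (fst z) (snd z) s) has_derivative
                   (\<lambda>h. gx x y s \<bullet> fst h + gy x y s \<bullet> snd h)) (at (x, y))"
    \<comment> \<open>f(x,y) = E_xi f(x,y;xi) is differentiable with partial gradients Gx, Gy\<close>
    and F_int: "\<forall>x y. integrable D (F x y)"
    and f_grad: "\<forall>x y. ((\<lambda>z. \<integral>s. F (fst z) (snd z) s \<partial>D) has_derivative
                   (\<lambda>h. Gx x y \<bullet> fst h + Gy x y \<bullet> snd h)) (at (x, y))"
    \<comment> \<open>measurability of the stochastic gradients (standing convention)\<close>
    and gx_meas: "(\<lambda>(z, s). gx (fst z) (snd z) s) \<in> borel_measurable (borel \<Otimes>\<^sub>M D)"
    and gy_meas: "(\<lambda>(z, s). gy (fst z) (snd z) s) \<in> borel_measurable (borel \<Otimes>\<^sub>M D)"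
    \<comment> \<open>(A2)\<close>
    and A2_gx: "\<forall>s\<in>space D. \<forall>x x' y y'.
        norm (gx x y s - gx x' y s) \<le> Lf * norm (x - x') \<and>
        norm (gx x y s - gx x y' s) \<le> Lf * norm (y - y')"
    and A2_gy: "\<forall>s\<in>space D. \<forall>x x' y y'.
        norm (gy x y s - gy x' y s) \<le> Lf * norm (x - x') \<and>
        norm (gy x y s - gy x y' s) \<le> Lf * norm (y - y')"
    \<comment> \<open>(A3)\<close>
    and A3_unbiased: "\<forall>x y. integrable D (gx x y) \<and> integrable D (gy x y) \<and>
        Gx x y = (\<integral>s. gx x y s \<partial>D) \<and> Gy x y = (\<integral>s. gy x y s \<partial>D)"
    and A3_var: "\<forall>x y.
        integrable D (\<lambda>s. (norm ((Gx x y, Gy x y) - (gx x y s, gy x y s)))\<^sup>2) \<and>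
        (\<integral>s. (norm ((Gx x y, Gy x y) - (gx x y s, gy x y s)))\<^sup>2 \<partial>D) \<le> \<sigma>\<^sup>2"
    and t: "t \<ge> 1"
  shows
   "((\<integral>\<omega>. (norm (msgda_v gx gy \<gamma> lam \<eta> \<alpha> \<beta> x1 y1 (\<lambda>i. \<xi> i \<omega>) (t + 1)
        - Gy (msgda_x gx gy \<gamma> lam \<eta> \<alpha> \<beta> x1 y1 (\<lambda>i. \<xi> i \<omega>) (t + 1))
             (msgda_y gx gy \<gamma> lam \<eta> \<alpha> \<beta> x1 y1 (\<lambda>i. \<xi> i \<omega>) (t + 1))))\<^sup>2 \<partial>M)
    \<le> (1 - \<alpha> (t + 1)) *
        (\<integral>\<omega>. (norm (msgda_v gx gy \<gamma> lam \<eta> \<alpha> \<beta> x1 y1 (\<lambda>i. \<xi> i \<omega>) t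
          - Gy (msgda_x gx gy \<gamma> lam \<eta> \<alpha> \<beta> x1 y1 (\<lambda>i. \<xi> i \<omega>) t)
               (msgda_y gx gy \<gamma> lam \<eta> \<alpha> \<beta> x1 y1 (\<lambda>i. \<xi> i \<omega>) t)))\<^sup>2 \<partial>M)
      + 2 * (\<alpha> (t + 1))\<^sup>2 * \<sigma>\<^sup>2
      + 4 * Lf\<^sup>2 * (\<eta> t)\<^sup>2 *
        (\<integral>\<omega>. (norm (msgda_xtil gx gy \<gamma> lam \<eta> \<alpha> \<beta> x1 y1 (\<lambda>i. \<xi> i \<omega>) (t + 1)
                   - msgda_x gx gy \<gamma> lam \<eta> \<alpha> \<beta> x1 y1 (\<lambda>i. \<xi> i \<omega>) t))\<^sup>2
              + (norm (msgda_ytil gx gy \<gamma> lam \<eta> \<alpha> \<beta> x1 y1 (\<lambda>i. \<xi> i \<omega>) (t + 1)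
                   - msgda_y gx gy \<gamma> lam \<eta> \<alpha> \<beta> x1 y1 (\<lambda>i. \<xi> i \<omega>) t))\<^sup>2 \<partial>M)) \<and>
   ((\<integral>\<omega>. (norm (msgda_w gx gy \<gamma> lam \<eta> \<alpha> \<beta> x1 y1 (\<lambda>i. \<xi> i \<omega>) (t + 1)
        - Gx (msgda_x gx gy \<gamma> lam \<eta> \<alpha> \<beta> x1 y1 (\<lambda>i. \<xi> i \<omega>) (t + 1))
             (msgda_y gx gy \<gamma> lam \<eta> \<alpha> \<beta> x1 y1 (\<lambda>i. \<xi> i \<omega>) (t + 1))))\<^sup>2 \<partial>M)
    \<le> (1 - \<beta> (t + 1)) *
        (\<integral>\<omega>. (norm (msgda_w gx gy \<gamma> lam \<eta> \<alpha> \<beta> x1 y1 (\<lambda>i. \<xi> i \<omega>) t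
          - Gx (msgda_x gx gy \<gamma> lam \<eta> \<alpha> \<beta> x1 y1 (\<lambda>i. \<xi> i \<omega>) t)
               (msgda_y gx gy \<gamma> lam \<eta> \<alpha> \<beta> x1 y1 (\<lambda>i. \<xi> i \<omega>) t)))\<^sup>2 \<partial>M)
      + 2 * (\<beta> (t + 1))\<^sup>2 * \<sigma>\<^sup>2
      + 4 * Lf\<^sup>2 * (\<eta> t)\<^sup>2 *
        (\<integral>\<omega>. (norm (msgda_xtil gx gy \<gamma> lam \<eta> \<alpha> \<beta> x1 y1 (\<lambda>i. \<xi> i \<omega>) (t + 1)
                   - msgda_x gx gy \<gamma> lam \<eta> \<alpha> \<beta> x1 y1 (\<lambda>i. \<xi> i \<omega>) t))\<^sup>2
              + (norm (msgda_ytil gx gy \<gamma> lam \<eta> \<alpha> \<beta> x1 y1 (\<lambda>i. \<xi> i \<omega>) (t + 1)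
                   - msgda_y gx gy \<gamma> lam \<eta> \<alpha> \<beta> x1 y1 (\<lambda>i. \<xi> i \<omega>) t))\<^sup>2 \<partial>M))"
proof -
  interpret msgda_setting M D \<xi> gx gy Gx Gy \<gamma> lam Lf \<sigma> \<eta> \<alpha> \<beta> x1 y1
    using M iid_indep iid_distr gx_meas gy_meas A2_gx A2_gy A3_unbiased A3_var
    by (simp add: msgda_setting_def msgda_setting_axioms_def)
  have "0 \<le> \<alpha> (t + 1)" "\<alpha> (t + 1) \<le> 1" "0 \<le> \<beta> (t + 1)" "\<beta> (t + 1) \<le> 1"
    using steps by (auto intro: less_imp_le)
  then show ?thesis
    using v_tracking_error_le[OF t] w_tracking_error_le[OF t] by blast
qed

end
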